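(* Let $A$ be a unital $C^*$-algebra and let $k>1$ be an integer. Suppose $e_1,\dots,e_k\in A$ are mutually orthogonal projections and $u\in U(A)$ is a unitary with $u^*e_iu=e_{i+1}$ for $i=1,\dots,k$, where $e_{k+1}=e_1$. Suppose $B$ is a finite dimensional $C^*$-subalgebra of $e_1Ae_1$ and $z\in U_0(e_1Ae_1)$ satisfies $z^*(u^k)^*bu^kz=b$ for all $b\in B$, and that $z=z_1z_2\cdots z_{k-1}$ with $z_i\in U(e_1Ae_1)$ for $i=1,\dots,k-1$; set $z_k=e_1$ (the unit of $e_1Ae_1$). Define $$w=\sum_{i=1}^k e_iu^{k+1-i}z_i(u^{k-i})^*+\Big(1-\sum_{i=1}^k e_i\Big)u.$$ Then $\|w-u\|\le\max\{\|z_i-e_1\|:1\le i\le k-1\}$, $(w^i)^*e_1w^i=e_{i+1}$ for $i=1,\dots,k-1$, and $(w^k)^*bw^k=b$ for all $b\in B$.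
   Context: $U(D)$ denotes the unitary group of a unital $C^*$-algebra $D$ and $U_0(D)$ the connected component of its identity; $e_1Ae_1$ is a unital $C^*$-algebra with unit $e_1$. *)

theory Defs
  imports "HOL-Analysis.Analysis"
begin

class cstar_algebra = real_normed_algebra_1 + banach +
  fixes scaleC :: "complex \<Rightarrow> 'a \<Rightarrow> 'a"
    and cstar :: "'a \<Rightarrow> 'a"
  assumes scaleC_of_real: "scaleC (complex_of_real r) x = scaleR r x"
    and scaleC_add_right: "scaleC c (x + y) = scaleC c x + scaleC c y"
    and scaleC_add_left: "scaleC (c + d) x = scaleC c x + scaleC d x"
    and scaleC_scaleC: "scaleC c (scaleC d x) = scaleC (c * d) x"
    and scaleC_one: "scaleC 1 x = x"
    and norm_scaleC: "norm (scaleC c x) = cmod c * norm x"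
    and scaleC_mult_left: "scaleC c (x * y) = scaleC c x * y"
    and scaleC_mult_right: "scaleC c (x * y) = x * scaleC c y"
    and cstar_cstar: "cstar (cstar x) = x"
    and cstar_add: "cstar (x + y) = cstar x + cstar y"
    and cstar_scaleC: "cstar (scaleC c x) = scaleC (cnj c) (cstar x)"
    and cstar_mult: "cstar (x * y) = cstar y * cstar x"
    and cstar_identity: "norm (cstar x * x) = (norm x)\<^sup>2"

definition projection :: "'a::cstar_algebra \<Rightarrow> bool" where
  "projection p \<longleftrightarrow> p * p = p \<and> cstar p = p"

definition unitary :: "'a::cstar_algebra \<Rightarrow> bool" where
  "unitary u \<longleftrightarrow> cstar u * u = 1 \<and> u * cstar u = 1"

definition corner :: "'a::cstar_algebra \<Rightarrow> 'a set" where
  "corner p = {p * a * p | a. True}"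

definition corner_unitaries :: "'a::cstar_algebra \<Rightarrow> 'a set" where
  "corner_unitaries p = {v \<in> corner p. cstar v * v = p \<and> v * cstar v = p}"

definition corner_unitaries0 :: "'a::cstar_algebra \<Rightarrow> 'a set" where
  "corner_unitaries0 p = connected_component_set (corner_unitaries p) p"

definition cspan :: "'a::cstar_algebra set \<Rightarrow> 'a set" where
  "cspan S = {x. \<exists>F c. finite F \<and> F \<subseteq> S \<and> x = (\<Sum>f\<in>F. scaleC (c f) f)}"

definition cstar_subalgebra :: "'a::cstar_algebra set \<Rightarrow> bool" where
  "cstar_subalgebra B \<longleftrightarrow> 0 \<in> B \<and> (\<forall>x\<in>B. \<forall>y\<in>B. x + y \<in> B \<and> x * y \<in> B)
     \<and> (\<forall>c. \<forall>x\<in>B. scaleC c x \<in> B) \<and> (\<forall>x\<in>B. cstar x \<in> B) \<and> closed B"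

definition finite_dimensional :: "'a::cstar_algebra set \<Rightarrow> bool" where
  "finite_dimensional B \<longleftrightarrow> (\<exists>F. finite F \<and> B \<subseteq> cspan F)"

end

theory Submission
  imports Defs
begin

text \<open>Put \<open>T i = e i * u ^ (k + 1 - i) * z i * (u ^ (k - i))\<^sup>*\<close> with \<open>z k = e 1\<close>.
  The shift relations \<open>e i * u = u * e (i + 1)\<close> give
  \<open>T i = u ^ (k + 1 - i) * z i * (u ^ (k - i))\<^sup>*\<close> and \<open>e i * w = T i\<close>, hence
  \<open>w\<^sup>* * e i * w = (T i)\<^sup>* * T i = e (i + 1)\<close>; iterating,
  \<open>e 1 * w ^ k = u ^ k * z 1 * ... * z (k - 1)\<close>, so on the corner \<open>e 1 A e 1\<close>
  conjugation by \<open>w ^ k\<close> is conjugation by \<open>u ^ k * zz\<close>.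

  The difference \<open>w - u\<close> is the sum over \<open>i < k\<close> of
  \<open>e i * u ^ (k + 1 - i) * (z i - e 1) * (u ^ (k - i))\<^sup>*\<close>, whose summands have
  mutually orthogonal left supports \<open>e i\<close> and right supports \<open>e (i + 1)\<close>.
  Such a sum \<open>D\<close> has norm at most the largest norm of a summand:
  \<open>D\<^sup>* * D\<close> is a sum of mutually orthogonal self-adjoint elements \<open>a i\<close>, and
  \<open>norm (D\<^sup>* * D) ^ 2 ^ n = norm (\<Sum>i. a i ^ 2 ^ n) \<le> k * max\<^sub>i norm (a i) ^ 2 ^ n\<close>
  for every \<open>n\<close>.\<close>

lemma cstar_zero [simp]: "cstar (0::'a::cstar_algebra) = 0"
  using cstar_add[of "0::'a" 0] by simp

lemma cstar_one [simp]: "cstar (1::'a::cstar_algebra) = 1"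
  using cstar_mult[of "cstar (1::'a)" 1] by (simp add: cstar_cstar)

lemma cstar_sum: "cstar (sum f A) = (\<Sum>i\<in>A. cstar (f i::'a::cstar_algebra))"
  by (induction A rule: infinite_finite_induct) (auto simp: cstar_add)

lemma cstar_power: "cstar (x ^ n) = cstar (x::'a::cstar_algebra) ^ n"
  by (induction n) (auto simp: cstar_mult power_commutes)

lemma projectionD:
  assumes "projection p"
  shows "p * p = p" "cstar p = p"
  using assms by (auto simp: projection_def)

lemma norm_projection_le: "projection (p::'a::cstar_algebra) \<Longrightarrow> norm p \<le> 1"
  using cstar_identity[of p] by (auto simp: projection_def power2_eq_square)

lemma unitary_mult: "unitary u \<Longrightarrow> unitary v \<Longrightarrow> unitary (u * (v::'a::cstar_algebra))"
  unfolding unitary_def by (simp add: cstar_mult mult.assoc[symmetric]) (simp add: mult.assoc)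

lemma unitary_power: "unitary (u::'a::cstar_algebra) \<Longrightarrow> unitary (u ^ n)"
  by (induction n) (simp_all add: unitary_def[of 1] unitary_mult)

lemma unitary_cstar: "unitary (u::'a::cstar_algebra) \<Longrightarrow> unitary (cstar u)"
  by (simp add: unitary_def cstar_cstar)

lemma norm_unitary_le: "unitary (u::'a::cstar_algebra) \<Longrightarrow> norm u \<le> 1"
  using cstar_identity[of u] by (auto simp: unitary_def power2_eq_1_iff)

lemma unitary_conj_imp_mult_eq:
  assumes "unitary u" "cstar u * p * u = q"
  shows "p * u = u * (q::'a::cstar_algebra)"
proof -
  have "p * u = u * cstar u * p * u" using assms(1) by (simp add: unitary_def)
  also have "\<dots> = u * q" using assms(2) by (simp add: mult.assoc)
  finally show ?thesis .
qed

lemma norm_sandwich_le: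
  fixes a c d :: "'a::real_normed_algebra"
  assumes "norm a \<le> 1" "norm d \<le> 1"
  shows "norm (a * c * d) \<le> norm c"
proof -
  have "norm (a * c * d) \<le> norm a * norm c * norm d"
    by (meson norm_mult_ineq order.trans mult_right_mono norm_ge_zero)
  also have "\<dots> \<le> 1 * norm c * 1"
    using assms by (intro mult_mono) auto
  finally show ?thesis by simp
qed

lemma corner_mult_projection:
  assumes "projection p" "x \<in> corner p"
  shows "p * x = x" "x * p = x"
  using assms unfolding corner_def projection_def
  by (auto simp: mult.assoc) (simp flip: mult.assoc)

lemma corner_unitariesD:
  assumes "projection p" "v \<in> corner_unitaries p"
  shows "p * v = v" "v * p = v" "cstar v * v = p"
  using assms corner_mult_projection[of p v] by (auto simp: corner_unitaries_def)

lemma projection_in_corner_unitaries: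
  assumes "projection p"
  shows "p \<in> corner_unitaries p"
proof -
  have "p = p * p * p" using assms by (simp add: projection_def)
  then have "p \<in> corner p" unfolding corner_def by blast
  then show ?thesis using assms by (simp add: corner_unitaries_def projection_def)
qed

lemma sum_mult_sum_orthogonal:
  fixes f g :: "'i \<Rightarrow> 'a::semiring_0"
  assumes "finite I" "\<And>i j. i \<in> I \<Longrightarrow> j \<in> I \<Longrightarrow> i \<noteq> j \<Longrightarrow> f i * g j = 0"
  shows "sum f I * sum g I = (\<Sum>i\<in>I. f i * g i)"
proof -
  have "sum f I * sum g I = (\<Sum>i\<in>I. \<Sum>j\<in>I. if j = i then f i * g i else 0)"
    unfolding sum_product using assms(2) by (intro sum.cong) auto
  then show ?thesis using assms(1) by simp
qed

lemma power_Suc_sum_orthogonal: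
  fixes a :: "'i \<Rightarrow> 'a::semiring_1"
  assumes "finite I" "\<And>i j. i \<in> I \<Longrightarrow> j \<in> I \<Longrightarrow> i \<noteq> j \<Longrightarrow> a i * a j = 0"
  shows "sum a I ^ Suc n = (\<Sum>i\<in>I. a i ^ Suc n)"
proof (induction n)
  case (Suc n)
  have "sum a I ^ Suc (Suc n) = (\<Sum>i\<in>I. a i ^ Suc n) * sum a I"
    by (simp only: power_Suc2[of _ "Suc n"] Suc)
  also have "\<dots> = (\<Sum>i\<in>I. a i ^ Suc n * a i)"
  proof (rule sum_mult_sum_orthogonal[OF assms(1)])
    fix i j assume "i \<in> I" "j \<in> I" "i \<noteq> j"
    have "a i ^ Suc n * a j = a i ^ n * (a i * a j)" by (simp only: power_Suc2 mult.assoc)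
    then show "a i ^ Suc n * a j = 0" using assms(2) \<open>i \<in> I\<close> \<open>j \<in> I\<close> \<open>i \<noteq> j\<close> by simp
  qed
  finally show ?case by (simp only: power_Suc2[of _ "Suc n"])
qed simp

lemma norm_power_2_selfadjoint:
  fixes b :: "'a::cstar_algebra"
  assumes "cstar b = b"
  shows "norm (b ^ 2 ^ n) = norm b ^ 2 ^ n"
proof (induction n)
  case (Suc n)
  have "b ^ 2 ^ Suc n = cstar (b ^ 2 ^ n) * b ^ 2 ^ n"
    using assms by (simp add: cstar_power power_add[symmetric] mult_2)
  then show ?case using Suc by (simp add: cstar_identity power_mult[symmetric] mult.commute)
qed simp

lemma le_of_power_2_bound:
  fixes x c M :: real
  assumes "0 \<le> M" and bound: "\<And>n. x ^ 2 ^ n \<le> c * M ^ 2 ^ n"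
  shows "x \<le> M"
proof (rule ccontr)
  assume "\<not> x \<le> M"
  then have "M < x" by simp
  show False
  proof (cases "M = 0")
    case True
    then show False using bound[of 0] \<open>M < x\<close> by simp
  next
    case False
    then have "0 < M" using assms(1) by simp
    define r where "r = x / M"
    have "1 < r" using \<open>M < x\<close> \<open>0 < M\<close> by (simp add: r_def)
    obtain n where n: "c < r ^ n" using real_arch_pow[OF \<open>1 < r\<close>] by blast
    have "r ^ n \<le> r ^ 2 ^ n"
      using \<open>1 < r\<close> less_exp[of n] by (intro power_increasing) auto
    also have "\<dots> = x ^ 2 ^ n / M ^ 2 ^ n" by (simp add: r_def power_divide)
    also have "\<dots> \<le> c" using bound[of n] \<open>0 < M\<close> by (simp add: divide_le_eq)
    finally show False using n by simp
  qed
qed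

lemma norm_sum_orthogonal_selfadjoint:
  fixes a :: "'i \<Rightarrow> 'a::cstar_algebra"
  assumes "finite I"
    and selfadjoint: "\<And>i. i \<in> I \<Longrightarrow> cstar (a i) = a i"
    and orthogonal: "\<And>i j. i \<in> I \<Longrightarrow> j \<in> I \<Longrightarrow> i \<noteq> j \<Longrightarrow> a i * a j = 0"
    and bound: "\<And>i. i \<in> I \<Longrightarrow> norm (a i) \<le> M" and "0 \<le> M"
  shows "norm (sum a I) \<le> M"
proof (rule le_of_power_2_bound[OF \<open>0 \<le> M\<close>])
  fix n :: nat
  obtain m where m: "2 ^ n = Suc m" using not0_implies_Suc[of "2 ^ n"] by auto
  have "cstar (sum a I) = sum a I" using selfadjoint by (simp add: cstar_sum)
  then have "norm (sum a I) ^ 2 ^ n = norm (sum a I ^ 2 ^ n)"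
    by (simp add: norm_power_2_selfadjoint)
  also have "\<dots> = norm (\<Sum>i\<in>I. a i ^ 2 ^ n)"
    unfolding m using power_Suc_sum_orthogonal[OF \<open>finite I\<close> orthogonal] by simp
  also have "\<dots> \<le> (\<Sum>i\<in>I. norm (a i) ^ 2 ^ n)"
    by (intro norm_sum[THEN order.trans] sum_mono norm_power_ineq)
  also have "\<dots> \<le> (\<Sum>i\<in>I. M ^ 2 ^ n)"
    using bound by (intro sum_mono power_mono) auto
  finally show "norm (sum a I) ^ 2 ^ n \<le> real (card I) * M ^ 2 ^ n" by simp
qed

lemma norm_sum_orthogonal:
  fixes D :: "'i \<Rightarrow> 'a::cstar_algebra"
  assumes "finite I"
    and orthogonal_ranges: "\<And>i j. i \<in> I \<Longrightarrow> j \<in> I \<Longrightarrow> i \<noteq> j \<Longrightarrow> cstar (D i) * D j = 0"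
    and orthogonal_supports: "\<And>i j. i \<in> I \<Longrightarrow> j \<in> I \<Longrightarrow> i \<noteq> j \<Longrightarrow> D i * cstar (D j) = 0"
    and bound: "\<And>i. i \<in> I \<Longrightarrow> norm (D i) \<le> M" and "0 \<le> M"
  shows "norm (sum D I) \<le> M"
proof -
  define a where "a i = cstar (D i) * D i" for i
  have "cstar (sum D I) * sum D I = sum a I"
    unfolding cstar_sum a_def using \<open>finite I\<close> orthogonal_ranges by (rule sum_mult_sum_orthogonal)
  then have "(norm (sum D I))\<^sup>2 = norm (sum a I)" by (simp flip: cstar_identity)
  also have "\<dots> \<le> M\<^sup>2"
  proof (rule norm_sum_orthogonal_selfadjoint[OF \<open>finite I\<close>])
    fix i j assume "i \<in> I" "j \<in> I" "i \<noteq> j"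
    then show "a i * a j = 0"
      using orthogonal_supports[of i j] by (simp add: a_def mult.assoc flip: mult.assoc[of "D i"])
  next
    fix i assume "i \<in> I"
    then show "norm (a i) \<le> M\<^sup>2" using bound \<open>0 \<le> M\<close> by (simp add: a_def cstar_identity power_mono)
  qed (simp_all add: a_def cstar_mult cstar_cstar)
  finally show ?thesis using \<open>0 \<le> M\<close> by (rule power2_le_imp_le)
qed

lemma norm_sum_orthogonal_projections:
  fixes D :: "'i \<Rightarrow> 'a::cstar_algebra"
  assumes "finite I"
    and "\<And>i. i \<in> I \<Longrightarrow> projection (p i)" "\<And>i. i \<in> I \<Longrightarrow> projection (q i)"
    and "\<And>i j. i \<in> I \<Longrightarrow> j \<in> I \<Longrightarrow> i \<noteq> j \<Longrightarrow> p i * p j = 0"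
    and "\<And>i j. i \<in> I \<Longrightarrow> j \<in> I \<Longrightarrow> i \<noteq> j \<Longrightarrow> q i * q j = 0"
    and "\<And>i. i \<in> I \<Longrightarrow> p i * D i = D i" "\<And>i. i \<in> I \<Longrightarrow> D i * q i = D i"
    and "\<And>i. i \<in> I \<Longrightarrow> norm (D i) \<le> M" "0 \<le> M"
  shows "norm (sum D I) \<le> M"
proof (rule norm_sum_orthogonal[OF \<open>finite I\<close>])
  fix i j assume ij: "i \<in> I" "j \<in> I" "i \<noteq> j"
  have "cstar (D i) * D j = cstar (D i) * (cstar (p i) * p j) * D j"
    using assms(2,6) ij by (metis cstar_mult mult.assoc)
  then show "cstar (D i) * D j = 0" using assms(2,4) ij by (simp add: projectionD)
  have "D i * cstar (D j) = D i * (q i * cstar (q j)) * cstar (D j)"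
    using assms(3,7) ij by (metis cstar_mult mult.assoc)
  then show "D i * cstar (D j) = 0" using assms(3,5) ij by (simp add: projectionD)
qed (use assms in auto)

locale cyclic_shift =
  fixes k :: nat and e :: "nat \<Rightarrow> 'a::cstar_algebra" and u :: 'a
  assumes k_pos: "0 < k"
    and projection_e: "\<And>i. i \<in> {1..k} \<Longrightarrow> projection (e i)"
    and e_orthogonal: "\<And>i j. i \<in> {1..k} \<Longrightarrow> j \<in> {1..k} \<Longrightarrow> i \<noteq> j \<Longrightarrow> e i * e j = 0"
    and unitary_u: "unitary u"
    and shift: "\<And>i. i \<in> {1..<k} \<Longrightarrow> cstar u * e i * u = e (i + 1)"
    and shift_last: "cstar u * e k * u = e 1"
begin

lemma e_idem: "i \<in> {1..k} \<Longrightarrow> e i * e i = e i"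
  and cstar_e: "i \<in> {1..k} \<Longrightarrow> cstar (e i) = e i"
  using projection_e projectionD by blast+

lemma projection_e1: "projection (e 1)"
  using projection_e k_pos by simp

lemma u_power_cstar_right: "u ^ n * cstar (u ^ n) = 1"
  and u_power_cstar_left: "cstar (u ^ n) * u ^ n = 1"
  using unitary_power[OF unitary_u] by (auto simp: unitary_def)

lemma e_mult_u_power:
  assumes "1 \<le> i" "i + m \<le> k"
  shows "e i * u ^ m = u ^ m * e (i + m)"
  using assms(2)
proof (induction m)
  case (Suc m)
  have "e i * u ^ Suc m = u ^ m * (e (i + m) * u)"
    using Suc by (simp only: power_Suc2 mult.assoc[symmetric])
  also have "\<dots> = u ^ m * (u * e (i + Suc m))"
    using unitary_conj_imp_mult_eq[OF unitary_u shift] assms(1) Suc.prems by simp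
  finally show ?case by (simp only: power_Suc2 mult.assoc)
qed simp

lemma e_mult_u_power_wrap:
  assumes "j \<in> {1..k}"
  shows "e j * u ^ (k + 1 - j) = u ^ (k + 1 - j) * e 1"
proof -
  have "e j * u ^ (k + 1 - j) = e j * u ^ (k - j) * u"
    using assms by (simp add: Suc_diff_le power_Suc2 mult.assoc del: power_Suc)
  also have "\<dots> = u ^ (k - j) * (e k * u)"
    using e_mult_u_power[of j "k - j"] assms by (simp add: mult.assoc)
  also have "\<dots> = u ^ (k + 1 - j) * e 1"
    using unitary_conj_imp_mult_eq[OF unitary_u shift_last] assms
    by (simp add: Suc_diff_le power_Suc2 mult.assoc del: power_Suc)
  finally show ?thesis .
qed

lemma e1_mult_cstar_u_power:
  assumes "m < k"
  shows "e 1 * cstar (u ^ (k - m)) = cstar (u ^ (k - m)) * e (m + 1)"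
proof -
  have "e (m + 1) * u ^ (k - m) = u ^ (k - m) * e 1"
    using e_mult_u_power_wrap[of "m + 1"] assms by simp
  then have "cstar (u ^ (k - m)) * cstar (e (m + 1)) = cstar (e 1) * cstar (u ^ (k - m))"
    by (metis cstar_mult)
  then show ?thesis using assms cstar_e k_pos by simp
qed

lemma u_power_conj_e1:
  assumes "m < k"
  shows "u ^ (k - m) * e 1 * cstar (u ^ (k - m)) = e (m + 1)"
proof -
  have "u ^ (k - m) * e 1 = e (m + 1) * u ^ (k - m)"
    using e_mult_u_power_wrap[of "m + 1"] assms by simp
  then show ?thesis by (simp add: mult.assoc u_power_cstar_right)
qed

end

locale cyclic_twist = cyclic_shift +
  fixes z :: "nat \<Rightarrow> 'a::cstar_algebra"
  assumes z_corner_unitary: "\<And>i. i \<in> {1..<k} \<Longrightarrow> z i \<in> corner_unitaries (e 1)"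
begin

definition twist :: "nat \<Rightarrow> 'a" where
  "twist i = (if i = k then e 1 else z i)"

definition twist_term :: "nat \<Rightarrow> 'a" where
  "twist_term i = e i * u ^ (k + 1 - i) * twist i * cstar (u ^ (k - i))"

definition twisted_u :: 'a where
  "twisted_u = (\<Sum>i=1..k. twist_term i) + (1 - (\<Sum>i=1..k. e i)) * u"

lemma twist_corner_unitary: "j \<in> {1..k} \<Longrightarrow> twist j \<in> corner_unitaries (e 1)"
  using z_corner_unitary projection_in_corner_unitaries[OF projection_e1]
  by (auto simp: twist_def)

lemma e1_mult_twist: "j \<in> {1..k} \<Longrightarrow> e 1 * twist j = twist j"
  and twist_mult_e1: "j \<in> {1..k} \<Longrightarrow> twist j * e 1 = twist j"
  and cstar_twist_mult: "j \<in> {1..k} \<Longrightarrow> cstar (twist j) * twist j = e 1"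
  using corner_unitariesD[OF projection_e1 twist_corner_unitary] by blast+

lemma twist_term_eq:
  assumes "j \<in> {1..k}"
  shows "twist_term j = u ^ (k + 1 - j) * twist j * cstar (u ^ (k - j))"
  using e_mult_u_power_wrap[OF assms] e1_mult_twist[OF assms]
  by (simp add: twist_term_def mult.assoc)

lemma cstar_twist_term_mult:
  assumes "j \<in> {1..<k}"
  shows "cstar (twist_term j) * twist_term j = e (j + 1)"
proof -
  have "cstar (twist_term j) * twist_term j
      = u ^ (k - j) * cstar (twist j) * (cstar (u ^ (k + 1 - j)) * u ^ (k + 1 - j)) * twist j
        * cstar (u ^ (k - j))"
    using assms by (simp add: twist_term_eq cstar_mult cstar_cstar mult.assoc)
  also have "\<dots> = u ^ (k - j) * e 1 * cstar (u ^ (k - j))"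
    using assms by (simp add: u_power_cstar_left cstar_twist_mult mult.assoc)
  also have "\<dots> = e (j + 1)" using assms u_power_conj_e1[of j] by simp
  finally show ?thesis .
qed

lemma e_mult_twist_term:
  assumes "i \<in> {1..k}" "j \<in> {1..k}"
  shows "e j * twist_term i = (if i = j then twist_term i else 0)"
  using e_idem[OF assms(1)] e_orthogonal[OF assms(2,1)]
  by (cases "i = j") (simp_all add: twist_term_def flip: mult.assoc)

lemma e_mult_sum_e:
  assumes "j \<in> {1..k}"
  shows "e j * (\<Sum>i=1..k. e i) = e j"
proof -
  have "e j * (\<Sum>i=1..k. e i) = (\<Sum>i=1..k. if i = j then e j else 0)"
    unfolding sum_distrib_left using e_orthogonal e_idem assms by (intro sum.cong) auto
  then show ?thesis using assms by simp
qed

lemma e_mult_twisted_u: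
  assumes "j \<in> {1..k}"
  shows "e j * twisted_u = twist_term j"
proof -
  have "e j * twisted_u = (\<Sum>i=1..k. e j * twist_term i) + (e j - e j * (\<Sum>i=1..k. e i)) * u"
    by (simp add: twisted_u_def sum_distrib_left distrib_left right_diff_distrib flip: mult.assoc)
  also have "\<dots> = (\<Sum>i=1..k. if i = j then twist_term i else 0)"
    using e_mult_twist_term e_mult_sum_e assms by simp
  also have "\<dots> = twist_term j" using assms by simp
  finally show ?thesis .
qed

lemma twisted_u_conj_e:
  assumes "j \<in> {1..<k}"
  shows "cstar twisted_u * e j * twisted_u = e (j + 1)"
proof -
  have j: "j \<in> {1..k}" using assms by simp
  have "cstar twisted_u * e j * twisted_u = cstar (e j * twisted_u) * (e j * twisted_u)"
    using e_idem[OF j] cstar_e[OF j] by (simp add: cstar_mult mult.assoc flip: mult.assoc[of "e j"])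
  then show ?thesis using e_mult_twisted_u[OF j] cstar_twist_term_mult[OF assms] by simp
qed

lemma twisted_u_power_conj_e1:
  assumes "i < k"
  shows "cstar (twisted_u ^ i) * e 1 * twisted_u ^ i = e (i + 1)"
  using assms
proof (induction i)
  case (Suc i)
  have "cstar (twisted_u ^ Suc i) * e 1 * twisted_u ^ Suc i
      = cstar twisted_u * (cstar (twisted_u ^ i) * e 1 * twisted_u ^ i) * twisted_u"
    by (simp only: power_Suc2 cstar_mult mult.assoc)
  also have "\<dots> = e (Suc i + 1)"
    using Suc twisted_u_conj_e[of "i + 1"] by simp
  finally show ?case .
qed simp

lemma e1_mult_twisted_u_power:
  assumes "m \<le> k"
  shows "e 1 * twisted_u ^ m = u ^ k * prod_list (map twist [1..<Suc m]) * e 1 * cstar (u ^ (k - m))"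
  using assms
proof (induction m)
  case 0
  have "e 1 = e 1 * u ^ k * cstar (u ^ k)" by (simp add: mult.assoc u_power_cstar_right)
  then show ?case using e_mult_u_power_wrap[of 1] k_pos by simp
next
  case (Suc m)
  let ?P = "prod_list (map twist [1..<Suc m])"
  have m: "m < k" "Suc m \<in> {1..k}" using Suc.prems by auto
  have "e 1 * twisted_u ^ Suc m = u ^ k * ?P * (e 1 * cstar (u ^ (k - m))) * twisted_u"
    unfolding power_Suc2 mult.assoc[symmetric, of "e 1"] Suc.IH[OF less_imp_le[OF m(1)]]
    by (simp only: mult.assoc)
  also have "\<dots> = u ^ k * ?P * cstar (u ^ (k - m)) * (e (Suc m) * twisted_u)"
    using e1_mult_cstar_u_power[OF m(1)] by (simp add: mult.assoc)
  also have "\<dots> = u ^ k * ?P * (cstar (u ^ (k - m)) * u ^ (k - m)) * (twist (Suc m) * e 1)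
      * cstar (u ^ (k - Suc m))"
    using m e_mult_twisted_u[of "Suc m"] twist_term_eq[of "Suc m"] twist_mult_e1[of "Suc m"]
    by (simp add: mult.assoc)
  also have "\<dots> = u ^ k * (?P * twist (Suc m)) * e 1 * cstar (u ^ (k - Suc m))"
    by (simp add: u_power_cstar_left mult.assoc)
  also have "?P * twist (Suc m) = prod_list (map twist [1..<Suc (Suc m)])" by simp
  finally show ?case .
qed

lemma e1_mult_twisted_u_power_k:
  "e 1 * twisted_u ^ k = u ^ k * prod_list (map z [1..<k]) * e 1"
proof -
  have "prod_list (map twist [1..<Suc k]) = prod_list (map twist [1..<k]) * twist k"
    using k_pos by simp
  also have "map twist [1..<k] = map z [1..<k]" by (simp add: twist_def)
  also have "twist k = e 1" by (simp add: twist_def)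
  finally show ?thesis
    using e1_mult_twisted_u_power[of k] e_idem[of 1] k_pos by (simp add: mult.assoc)
qed

lemma twisted_u_power_k_conj:
  assumes "b \<in> corner (e 1)"
  defines "Z \<equiv> prod_list (map z [1..<k]) * e 1"
  shows "cstar (twisted_u ^ k) * b * twisted_u ^ k = cstar Z * cstar (u ^ k) * b * u ^ k * Z"
proof -
  let ?W = "twisted_u ^ k"
  have eb: "e 1 * b = b" "b * e 1 = b"
    using corner_mult_projection[OF projection_e1 assms(1)] by simp_all
  have "cstar Z * cstar (u ^ k) * b * u ^ k * Z = cstar (e 1 * ?W) * b * (e 1 * ?W)"
    unfolding e1_mult_twisted_u_power_k Z_def by (simp add: cstar_mult mult.assoc)
  also have "\<dots> = cstar ?W * (e 1 * b) * e 1 * ?W"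
    using cstar_e[of 1] k_pos by (simp add: cstar_mult mult.assoc)
  also have "\<dots> = cstar ?W * (b * e 1) * ?W"
    unfolding eb(1) by (simp only: mult.assoc)
  finally show ?thesis unfolding eb(2) ..
qed

lemma twist_term_minus_e_mult_u:
  assumes "i \<in> {1..k}"
  shows "twist_term i - e i * u = e i * u ^ (k + 1 - i) * (twist i - e 1) * cstar (u ^ (k - i))"
proof -
  have "e i * u ^ (k + 1 - i) * e 1 = e i * u ^ (k + 1 - i)"
    using e_mult_u_power_wrap[OF assms] e_idem[of 1] k_pos by (simp add: mult.assoc)
  moreover have "e i * u ^ (k + 1 - i) * cstar (u ^ (k - i)) = e i * u"
    using assms by (simp add: Suc_diff_le mult.assoc u_power_cstar_right)
  ultimately show ?thesis
    by (simp add: twist_term_def right_diff_distrib left_diff_distrib)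
qed

lemma twisted_u_minus_u:
  "twisted_u - u = (\<Sum>i\<in>{1..<k}. e i * u ^ (k + 1 - i) * (z i - e 1) * cstar (u ^ (k - i)))"
proof -
  have "twisted_u - u = (\<Sum>i=1..k. twist_term i) - (\<Sum>i=1..k. e i) * u"
    by (simp add: twisted_u_def algebra_simps)
  also have "\<dots> = (\<Sum>i=1..k. twist_term i - e i * u)"
    by (simp add: sum_distrib_right sum_subtractf)
  also have "\<dots> = (\<Sum>i=1..k. e i * u ^ (k + 1 - i) * (twist i - e 1) * cstar (u ^ (k - i)))"
    using twist_term_minus_e_mult_u by simp
  also have "\<dots> = (\<Sum>i\<in>{1..<k}. e i * u ^ (k + 1 - i) * (twist i - e 1) * cstar (u ^ (k - i)))"
    using k_pos by (intro sum.mono_neutral_right) (auto simp: twist_def)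
  also have "\<dots> = (\<Sum>i\<in>{1..<k}. e i * u ^ (k + 1 - i) * (z i - e 1) * cstar (u ^ (k - i)))"
    by (simp add: twist_def)
  finally show ?thesis .
qed

lemma z_minus_e1_mult_cstar_u_power:
  assumes "i \<in> {1..<k}"
  shows "(z i - e 1) * cstar (u ^ (k - i)) * e (i + 1) = (z i - e 1) * cstar (u ^ (k - i))"
proof -
  have "(z i - e 1) * e 1 = z i - e 1"
    using twist_mult_e1[of i] e_idem[of 1] assms by (simp add: twist_def left_diff_distrib)
  then have "(z i - e 1) * cstar (u ^ (k - i)) = (z i - e 1) * (e 1 * cstar (u ^ (k - i)))"
    by (simp flip: mult.assoc)
  also have "\<dots> = (z i - e 1) * cstar (u ^ (k - i)) * e (i + 1)"
    using e1_mult_cstar_u_power[of i] assms by (simp add: mult.assoc)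
  finally show ?thesis using e_idem[of "i + 1"] assms by (simp add: mult.assoc)
qed

lemma norm_twisted_u_minus_u:
  assumes "1 < k"
  shows "norm (twisted_u - u) \<le> Max ((\<lambda>i. norm (z i - e 1)) ` {1..<k})"
    (is "_ \<le> ?M")
  unfolding twisted_u_minus_u
proof (rule norm_sum_orthogonal_projections[where p = e and q = "\<lambda>i. e (i + 1)"])
  fix i assume i: "i \<in> {1..<k}"
  have "norm (e i * u ^ (k + 1 - i)) \<le> norm (e i) * norm (u ^ (k + 1 - i))"
    by (rule norm_mult_ineq)
  also have "\<dots> \<le> 1"
    using i norm_projection_le[OF projection_e] norm_unitary_le[OF unitary_power[OF unitary_u]]
    by (intro mult_le_one) auto
  finally have "norm (e i * u ^ (k + 1 - i) * (z i - e 1) * cstar (u ^ (k - i))) \<le> norm (z i - e 1)"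
    by (rule norm_sandwich_le) (intro norm_unitary_le unitary_cstar unitary_power unitary_u)
  also have "\<dots> \<le> ?M" using i by (intro Max_ge) auto
  finally show "norm (e i * u ^ (k + 1 - i) * (z i - e 1) * cstar (u ^ (k - i))) \<le> ?M" .
  show "e i * (e i * u ^ (k + 1 - i) * (z i - e 1) * cstar (u ^ (k - i)))
      = e i * u ^ (k + 1 - i) * (z i - e 1) * cstar (u ^ (k - i))"
    using e_idem[of i] i by (simp flip: mult.assoc)
  show "e i * u ^ (k + 1 - i) * (z i - e 1) * cstar (u ^ (k - i)) * e (i + 1)
      = e i * u ^ (k + 1 - i) * (z i - e 1) * cstar (u ^ (k - i))"
    using z_minus_e1_mult_cstar_u_power[OF i] by (simp add: mult.assoc)
next
  show "0 \<le> ?M" using assms by (intro order.trans[OF norm_ge_zero Max_ge[of _ "norm (z 1 - e 1)"]]) auto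
qed (use projection_e e_orthogonal in auto)

end

theorem lemma2p12:
  fixes k :: nat
    and e :: "nat \<Rightarrow> 'a::cstar_algebra"
    and u zz :: 'a
    and z :: "nat \<Rightarrow> 'a"
    and B :: "'a set"
  assumes k: "k > 1"
    and proj: "\<forall>i\<in>{1..k}. projection (e i)"
    and orth: "\<forall>i\<in>{1..k}. \<forall>j\<in>{1..k}. i \<noteq> j \<longrightarrow> e i * e j = 0"
    and u: "unitary u"
    and shift: "\<forall>i\<in>{1..<k}. cstar u * e i * u = e (i + 1)"
    and shift_last: "cstar u * e k * u = e 1"
    and B: "cstar_subalgebra B" "finite_dimensional B" "B \<subseteq> corner (e 1)"
    and zz: "zz \<in> corner_unitaries0 (e 1)"
    and zzB: "\<forall>b\<in>B. cstar zz * cstar (u ^ k) * b * u ^ k * zz = b"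
    and zi: "\<forall>i\<in>{1..<k}. z i \<in> corner_unitaries (e 1)"
    and zprod: "zz = prod_list (map z [1..<k])"
  shows "let z' = (\<lambda>i. if i = k then e 1 else z i);
             w = (\<Sum>i=1..k. e i * u ^ (k + 1 - i) * z' i * cstar (u ^ (k - i)))
                 + (1 - (\<Sum>i=1..k. e i)) * u
         in norm (w - u) \<le> Max ((\<lambda>i. norm (z i - e 1)) ` {1..k-1})
            \<and> (\<forall>i\<in>{1..k-1}. cstar (w ^ i) * e 1 * w ^ i = e (i + 1))
            \<and> (\<forall>b\<in>B. cstar (w ^ k) * b * w ^ k = b)"
proof -
  interpret cyclic_twist k e u z
    using assms by unfold_locales auto
  have zz_corner: "zz \<in> corner (e 1)"
    using zz connected_component_subset
    unfolding corner_unitaries0_def corner_unitaries_def by fastforce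
  have "prod_list (map z [1..<k]) * e 1 = zz"
    using corner_mult_projection[OF projection_e1 zz_corner] zprod by simp
  then have "\<forall>b\<in>B. cstar (twisted_u ^ k) * b * twisted_u ^ k = b"
    using twisted_u_power_k_conj B(3) zzB by auto
  moreover have "\<forall>i\<in>{1..k-1}. cstar (twisted_u ^ i) * e 1 * twisted_u ^ i = e (i + 1)"
    using twisted_u_power_conj_e1 by auto
  moreover have "norm (twisted_u - u) \<le> Max ((\<lambda>i. norm (z i - e 1)) ` {1..k-1})"
    using norm_twisted_u_minus_u k by (simp add: atLeastLessThanSuc_atLeastAtMost[symmetric])
  ultimately show ?thesis
    unfolding Let_def twisted_u_def twist_term_def twist_def by blast
qed

end
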